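(* For all $t\in\mathcal T_{\mathcal I}$ we have $W_{\rm lr}(t)\le W_{\rm mm}(t,t,t)$.
   Context: $\mathcal T_{\mathcal I}$ is a binary cluster tree for a finite index set $\mathcal I$ (each cluster $t$ has label $\hat t\subseteq\mathcal I$; a non-leaf cluster has exactly two sons $t_1,t_2$ whose labels disjointly partition $\hat t$), with a block tree $\mathcal T_{\mathcal I\times\mathcal I}$ whose non-leaf blocks $(t,s)$ have sons $\mathrm{sons}^+(t)\times\mathrm{sons}^+(s)$ ($\mathrm{sons}^+(t)=\mathrm{sons}(t)$ for non-leaves, $\{t\}$ for leaves). $W_{\rm mm}(t,s,r)$ is the number of operations of the recursive $\mathcal H^2$-matrix multiplication algorithm for $Z|_{\hat t\times\hat r}\gets Z|_{\hat t\times\hat r}+X|_{\hat t\times\hat s}Y|_{\hat s\times\hat r}$, which for non-leaf blocks recurses into all son triples so that $W_{\rm mm}(t,s,r)\ge\sum_{t'\in\mathrm{sons}^+(t),s'\in\mathrm{sons}^+(s),r'\in\mathrm{sons}^+(r)}W_{\rm mm}(t',s',r')$. $W_{\rm lfs}(t,s)$ and $W_{\rm rfs}(t,s)$ are the operation counts of the recursive block forward substitutions for $L|_{\hat t\times\hat t}X=Y|_{\hat t\times\hat s}$ and $XR|_{\hat s\times\hat s}=Y|_{\hat t\times\hat s}$, which satisfy $W_{\rm lfs}(t,s)\le W_{\rm mm}(t,t,s)$ and $W_{\rm rfs}(t,s)\le W_{\rm mm}(t,s,s)$. $W_{\rm lr}(t)$ is the number of operations of the recursive LR factorization $L|_{\hat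 t\times\hat t}R|_{\hat t\times\hat t}=A|_{\hat t\times\hat t}$: for a leaf $t$, dense Gaussian elimination is used, costing at most $W_{\rm mm}(t,t,t)$; otherwise, with $\mathrm{sons}(t)=\{t_1,t_2\}$, it factorizes $A|_{\hat t_1\times\hat t_1}$ recursively, solves $L|_{\hat t_1\times\hat t_1}R|_{\hat t_1\times\hat t_2}=A|_{\hat t_1\times\hat t_2}$ and $L|_{\hat t_2\times\hat t_1}R|_{\hat t_1\times\hat t_1}=A|_{\hat t_2\times\hat t_1}$ by forward substitution, computes $A|_{\hat t_2\times\hat t_2}-L|_{\hat t_2\times\hat t_1}R|_{\hat t_1\times\hat t_2}$ by the multiplication algorithm, and factorizes it recursively, so $W_{\rm lr}(t)=W_{\rm lr}(t_1)+W_{\rm lfs}(t_1,t_2)+W_{\rm rfs}(t_2,t_1)+W_{\rm mm}(t_2,t_1,t_2)+W_{\rm lr}(t_2)$. *)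

theory Defs
  imports Main
begin

datatype 'i ctree = Leaf "'i set" | Node "'i set" "'i ctree" "'i ctree"

fun label :: "'i ctree \<Rightarrow> 'i set" where
  "label (Leaf L) = L"
| "label (Node L _ _) = L"

fun wf_ctree :: "'i ctree \<Rightarrow> bool" where
  "wf_ctree (Leaf L) = True"
| "wf_ctree (Node L t1 t2) =
     (label t1 \<inter> label t2 = {} \<and> label t1 \<union> label t2 = L \<and> wf_ctree t1 \<and> wf_ctree t2)"

definition cluster_tree :: "'i set \<Rightarrow> 'i ctree \<Rightarrow> bool" where
  "cluster_tree I r \<longleftrightarrow> finite I \<and> label r = I \<and> wf_ctree r"

fun clusters :: "'i ctree \<Rightarrow> 'i ctree set" where
  "clusters (Leaf L) = {Leaf L}"
| "clusters (Node L t1 t2) = insert (Node L t1 t2) (clusters t1 \<union> clusters t2)"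

text \<open>sons^+(t), as a list (so that two sons are always counted separately).\<close>
fun sonsp :: "'i ctree \<Rightarrow> 'i ctree list" where
  "sonsp (Leaf L) = [Leaf L]"
| "sonsp (Node L t1 t2) = [t1, t2]"

definition sons_triple_sum :: "('i ctree \<Rightarrow> 'i ctree \<Rightarrow> 'i ctree \<Rightarrow> nat) \<Rightarrow>
    'i ctree \<Rightarrow> 'i ctree \<Rightarrow> 'i ctree \<Rightarrow> nat" where
  "sons_triple_sum W t s r = sum_list [W t' s' r'. t' \<leftarrow> sonsp t, s' \<leftarrow> sonsp s, r' \<leftarrow> sonsp r]"

end

theory Submission
  imports Defs
begin

text \<open>For a node t with sons t1, t2, each of the five
  summands of the LR cost is dominated by a different one of the eight son triples of the
  recursive multiplication for (t,t,t): the two recursive factorizations by (t1,t1,t1) and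
  (t2,t2,t2) (induction hypothesis), the forward substitutions by (t1,t1,t2) and (t2,t1,t1),
  and the Schur complement update by (t2,t1,t2) itself.\<close>

lemma clusters_self: "t \<in> clusters t"
  by (cases t) auto

lemma clusters_trans: "s \<in> clusters t \<Longrightarrow> u \<in> clusters s \<Longrightarrow> u \<in> clusters t"
  by (induction t) auto

lemma sons_in_clusters:
  assumes "Node L t1 t2 \<in> clusters r"
  shows "t1 \<in> clusters r" and "t2 \<in> clusters r"
  using clusters_trans[OF assms] clusters_self by auto

lemma sons_triple_sum_Node_diag:
  "sons_triple_sum W (Node L t1 t2) (Node L t1 t2) (Node L t1 t2) =
     W t1 t1 t1 + W t1 t1 t2 + W t1 t2 t1 + W t1 t2 t2 +
     W t2 t1 t1 + W t2 t1 t2 + W t2 t2 t1 + W t2 t2 t2"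
  by (simp add: sons_triple_sum_def add.assoc)

theorem mainTheorem4:
  fixes I :: "'i set" and root :: "'i ctree"
    and W_mm :: "'i ctree \<Rightarrow> 'i ctree \<Rightarrow> 'i ctree \<Rightarrow> nat"
    and W_lfs W_rfs :: "'i ctree \<Rightarrow> 'i ctree \<Rightarrow> nat"
    and W_lr :: "'i ctree \<Rightarrow> nat"
  assumes tree: "cluster_tree I root"
    and mm: "\<And>t s r. t \<in> clusters root \<Longrightarrow> s \<in> clusters root \<Longrightarrow> r \<in> clusters root \<Longrightarrow>
               sons_triple_sum W_mm t s r \<le> W_mm t s r"
    and lfs: "\<And>t s. t \<in> clusters root \<Longrightarrow> s \<in> clusters root \<Longrightarrow> W_lfs t s \<le> W_mm t t s"
    and rfs: "\<And>t s. t \<in> clusters root \<Longrightarrow> s \<in> clusters root \<Longrightarrow> W_rfs t s \<le> W_mm t s s"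
    and lr_leaf: "\<And>L. Leaf L \<in> clusters root \<Longrightarrow> W_lr (Leaf L) \<le> W_mm (Leaf L) (Leaf L) (Leaf L)"
    and lr_node: "\<And>L t1 t2. Node L t1 t2 \<in> clusters root \<Longrightarrow>
               W_lr (Node L t1 t2) = W_lr t1 + W_lfs t1 t2 + W_rfs t2 t1 + W_mm t2 t1 t2 + W_lr t2"
  shows "\<forall>t \<in> clusters root. W_lr t \<le> W_mm t t t"
proof
  fix t assume "t \<in> clusters root"
  then show "W_lr t \<le> W_mm t t t"
  proof (induction t)
    case (Leaf L)
    then show ?case by (rule lr_leaf)
  next
    case (Node L t1 t2)
    note sons = sons_in_clusters[OF Node.prems]
    have "W_lr t1 \<le> W_mm t1 t1 t1" and "W_lr t2 \<le> W_mm t2 t2 t2"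
      using Node.IH sons by blast+
    moreover have "W_lfs t1 t2 \<le> W_mm t1 t1 t2" and "W_rfs t2 t1 \<le> W_mm t2 t1 t1"
      using lfs rfs sons by blast+
    moreover have "sons_triple_sum W_mm (Node L t1 t2) (Node L t1 t2) (Node L t1 t2)
        \<le> W_mm (Node L t1 t2) (Node L t1 t2) (Node L t1 t2)"
      using mm Node.prems by blast
    ultimately show ?case
      unfolding lr_node[OF Node.prems] sons_triple_sum_Node_diag by linarith
  qed
qed

end
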